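(* The RMMS is feasible for monotone valuations: for every set $M$ of items, every $n\ge1$, and every $n$ normalized monotone valuations $v_1,\dots,v_n$ on $M$, there exists an allocation $A_1,\dots,A_n$ (a partition of $M$) with $v_i(A_i)\ge \mathrm{RMMS}(M,v_i,n)$ for every $i$.
   Context: Items: a finite set $M$; there are $n$ agents $a_1,\dots,a_n$, agent $a_i$ having valuation $v_i$. A valuation is a function $v:2^M\to\mathbb{R}$ that is normalized ($v(\emptyset)=0$) and monotone ($v(S)\le v(T)$ whenever $S\subseteq T$). An allocation is a partition $A_1,\dots,A_n$ of $M$ (parts may be empty). Residual maximin share: $\mathrm{RMMS}(M,v,n)$ is the largest real $t$ with the following property: for every $0\le k<n$ and every $k$ pairwise disjoint bundles $B_1,\dots,B_k\subseteq M$ with $v(B_j)<t$ for all $j$, the set $M\setminus(B_1\cup\dots\cup B_k)$ can be partitioned into $n-k$ bundles each of value (under $v$) at least $t$. *)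

theory Defs
  imports Main "HOL.Real"
begin

definition valuation :: "'a set \<Rightarrow> ('a set \<Rightarrow> real) \<Rightarrow> bool" where
  "valuation M v \<longleftrightarrow> v {} = 0 \<and> (\<forall>S T. S \<subseteq> T \<longrightarrow> T \<subseteq> M \<longrightarrow> v S \<le> v T)"

definition is_partition :: "'a set \<Rightarrow> nat \<Rightarrow> (nat \<Rightarrow> 'a set) \<Rightarrow> bool" where
  "is_partition S m C \<longleftrightarrow> (\<Union>i<m. C i) = S \<and> (\<forall>i<m. \<forall>j<m. i \<noteq> j \<longrightarrow> C i \<inter> C j = {})"

definition rmms_prop :: "'a set \<Rightarrow> ('a set \<Rightarrow> real) \<Rightarrow> nat \<Rightarrow> real \<Rightarrow> bool" where
  "rmms_prop M v n t \<longleftrightarrow>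
     (\<forall>k<n. \<forall>B :: nat \<Rightarrow> 'a set.
        (\<forall>j<k. B j \<subseteq> M \<and> v (B j) < t) \<and> (\<forall>i<k. \<forall>j<k. i \<noteq> j \<longrightarrow> B i \<inter> B j = {})
        \<longrightarrow> (\<exists>C. is_partition (M - (\<Union>j<k. B j)) (n - k) C \<and> (\<forall>i<n - k. t \<le> v (C i))))"

definition RMMS :: "'a set \<Rightarrow> ('a set \<Rightarrow> real) \<Rightarrow> nat \<Rightarrow> real" where
  "RMMS M v n = (GREATEST t. rmms_prop M v n t)"

end

theory Submission
  imports Defs "HOL-Library.Disjoint_Sets"
begin

text \<open>
  Induction on the number of agents. Suppose every agent j of a nonempty set N has a threshold
  t j with the RMMS property for the item set R and |N| bundles. Split R into |N| bundles each
  worth at least t a to some agent a, and let agent j like a bundle worth at least t j to it.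
  Since a likes every bundle, Hall's theorem yields a nonempty envy-free matching: agents Y
  matched to distinct liked bundles such that no unmatched agent likes a matched bundle. To an
  unmatched agent the |Y| matched bundles are all worth less than its threshold, so the threshold
  keeps the RMMS property for the remaining items and the |N| - |Y| remaining agents.
  Finally, RMMS itself has the RMMS property: a threshold with the property can be raised to the
  least value of v above it, so the greatest such threshold exists among the finitely many values
  of v.
\<close>

definition hall_condition :: "'i set \<Rightarrow> ('i \<Rightarrow> 'a set) \<Rightarrow> bool" where
  "hall_condition I A \<longleftrightarrow> (\<forall>J\<subseteq>I. card J \<le> card (\<Union>(A ` J)))"

lemma hall_conditionD: "hall_condition I A \<Longrightarrow> J \<subseteq> I \<Longrightarrow> card J \<le> card (\<Union>(A ` J))"
  unfolding hall_condition_def by blast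

lemma hall_condition_Diff_tight:
  assumes hall: "hall_condition I A" and fin: "finite I"
    and J: "J \<subseteq> I" "card (\<Union>(A ` J)) \<le> card J"
  shows "hall_condition (I - J) (\<lambda>i. A i - \<Union>(A ` J))"
  unfolding hall_condition_def
proof (intro allI impI)
  fix K assume K: "K \<subseteq> I - J"
  have fin_KJ: "finite K" "finite J"
    using K J fin by (auto intro: finite_subset)
  have tight: "card (\<Union>(A ` J)) = card J"
    using hall_conditionD[OF hall J(1)] J(2) by simp
  have "card K + card J = card (K \<union> J)"
    using K fin_KJ(1,2) by (subst card_Un_disjoint) auto
  also have "\<dots> \<le> card (\<Union>(A ` (K \<union> J)))"
    using K J by (intro hall_conditionD[OF hall]) auto
  also have "\<dots> \<le> card (\<Union>(A ` K) - \<Union>(A ` J)) + card (\<Union>(A ` J))"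
    using card_Un_le[of "\<Union>(A ` K) - \<Union>(A ` J)" "\<Union>(A ` J)"] by (simp add: Un_Diff_cancel2)
  finally have "card K \<le> card (\<Union>(A ` K) - \<Union>(A ` J))"
    using tight by linarith
  also have "\<Union>(A ` K) - \<Union>(A ` J) = \<Union>((\<lambda>i. A i - \<Union>(A ` J)) ` K)"
    by blast
  finally show "card K \<le> card (\<Union>((\<lambda>i. A i - \<Union>(A ` J)) ` K))" .
qed

lemma hall_condition_remove_matched_pair:
  assumes surplus: "\<And>J. J \<subseteq> I \<Longrightarrow> J \<noteq> {} \<Longrightarrow> J \<noteq> I \<Longrightarrow> card J < card (\<Union>(A ` J))"
    and "i \<in> I"
  shows "hall_condition (I - {i}) (\<lambda>j. A j - {x})"
  unfolding hall_condition_def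
proof (intro allI impI)
  fix K assume K: "K \<subseteq> I - {i}"
  show "card K \<le> card (\<Union>((\<lambda>j. A j - {x}) ` K))"
  proof (cases "K = {}")
    case False
    then have "card K < card (\<Union>(A ` K))"
      using K \<open>i \<in> I\<close> by (intro surplus) auto
    then have "card K \<le> card (\<Union>(A ` K)) - 1"
      by linarith
    also have "\<dots> \<le> card (\<Union>(A ` K) - {x})"
      using diff_card_le_card_Diff[of "{x}" "\<Union>(A ` K)"] by simp
    also have "\<Union>(A ` K) - {x} = \<Union>((\<lambda>j. A j - {x}) ` K)"
      by blast
    finally show ?thesis .
  qed simp
qed

lemma matching_Un:
  assumes "inj_on f J" "\<forall>i\<in>J. f i \<in> A i" "inj_on g K" "\<forall>i\<in>K. g i \<in> A i" "f ` J \<inter> g ` K = {}"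
  shows "\<exists>h. inj_on h (J \<union> K) \<and> (\<forall>i\<in>J \<union> K. h i \<in> A i)"
proof (intro exI conjI)
  show "inj_on (\<lambda>i. if i \<in> J then f i else g i) (J \<union> K)"
    using assms(1,3,5) unfolding inj_on_def by (metis (no_types, lifting) IntI Un_iff empty_iff image_eqI)
qed (use assms(2,4) in auto)

theorem hall_marriage:
  assumes "finite I" "hall_condition I A"
  shows "\<exists>f. inj_on f I \<and> (\<forall>i\<in>I. f i \<in> A i)"
  using assms
proof (induction "card I" arbitrary: I A rule: less_induct)
  case less
  have hall_sub: "hall_condition J A" if "J \<subseteq> I" for J
    using less.prems(2) that unfolding hall_condition_def by auto
  show ?case
  proof (cases "\<exists>J\<subseteq>I. J \<noteq> {} \<and> J \<noteq> I \<and> card (\<Union>(A ` J)) \<le> card J")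
    case True
    then obtain J where J: "J \<subseteq> I" "J \<noteq> {}" "J \<noteq> I" "card (\<Union>(A ` J)) \<le> card J"
      by blast
    have "card J < card I"
      using J(1,3) less.prems(1) by (intro psubset_card_mono) auto
    then obtain f where f: "inj_on f J" "\<forall>i\<in>J. f i \<in> A i"
      using less.hyps finite_subset[OF J(1) less.prems(1)] hall_sub[OF J(1)] by blast
    have "card (I - J) < card I"
      using J(1,2) less.prems(1) by (intro psubset_card_mono) auto
    then obtain g where g: "inj_on g (I - J)" "\<forall>i\<in>I - J. g i \<in> A i - \<Union>(A ` J)"
      using less.hyps less.prems(1) hall_condition_Diff_tight[OF less.prems(2) less.prems(1) J(1,4)]
      by blast
    have "f ` J \<inter> g ` (I - J) = {}"
      using f(2) g(2) by auto
    then show ?thesis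
      using matching_Un[OF f, of g "I - J"] g J(1) by (simp add: Un_absorb1)
  next
    case False
    then have surplus: "card J < card (\<Union>(A ` J))" if "J \<subseteq> I" "J \<noteq> {}" "J \<noteq> I" for J
      using that by (meson not_le)
    show ?thesis
    proof (cases "I = {}")
      case False
      then obtain i where i: "i \<in> I"
        by blast
      have "card {i} \<le> card (A i)"
        using hall_conditionD[OF less.prems(2), of "{i}"] i by simp
      then obtain x where x: "x \<in> A i"
        by fastforce
      have "card (I - {i}) < card I"
        using less.prems(1) i by (rule card_Diff1_less)
      then obtain g where g: "inj_on g (I - {i})" "\<forall>j\<in>I - {i}. g j \<in> A j - {x}"
        using less.hyps less.prems(1) hall_condition_remove_matched_pair[OF surplus i] by blast
      have "(\<lambda>_. x) ` {i} \<inter> g ` (I - {i}) = {}"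
        using g(2) by auto
      moreover have "{i} \<union> (I - {i}) = I"
        using i by blast
      ultimately show ?thesis
        using matching_Un[of "\<lambda>_. x" "{i}" A g "I - {i}"] g x by simp
    qed simp
  qed
qed

definition envy_free_matching :: "'p set \<Rightarrow> ('p \<Rightarrow> 'q set) \<Rightarrow> 'p set \<Rightarrow> ('p \<Rightarrow> 'q) \<Rightarrow> bool" where
  "envy_free_matching P A Y f \<longleftrightarrow>
     Y \<subseteq> P \<and> inj_on f Y \<and> (\<forall>y\<in>Y. f y \<in> A y) \<and> (\<forall>p\<in>P - Y. f ` Y \<inter> A p = {})"

lemma envy_free_matching_Diff_neighbourhood:
  assumes "envy_free_matching (P - J) (\<lambda>p. A p - \<Union>(A ` J)) Y f"
  shows "envy_free_matching P A Y f"
  using assms unfolding envy_free_matching_def by blast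

lemma deficient_set_Diff:
  assumes "finite P" "finite Q" "card P \<le> card Q" "\<forall>p\<in>P. A p \<subseteq> Q"
    and "J \<subseteq> P" "card (\<Union>(A ` J)) < card J"
  shows "card (P - J) \<le> card (Q - \<Union>(A ` J))" "\<not> Q \<subseteq> \<Union>(A ` J)"
proof -
  have "\<Union>(A ` J) \<subseteq> Q" "card J \<le> card P"
    using assms(1,4,5) by (auto simp: card_mono)
  moreover have "card (P - J) = card P - card J" "card (Q - \<Union>(A ` J)) = card Q - card (\<Union>(A ` J))"
    using assms(1,2,5) \<open>\<Union>(A ` J) \<subseteq> Q\<close> by (meson card_Diff_subset finite_subset)+
  ultimately show "card (P - J) \<le> card (Q - \<Union>(A ` J))" "\<not> Q \<subseteq> \<Union>(A ` J)"
    using assms(3,6) by (auto dest: subset_antisym)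
qed

lemma envy_free_matching_exists:
  assumes "finite P" "finite Q" "a \<in> P" "card P \<le> card Q" "A a = Q" "\<forall>p\<in>P. A p \<subseteq> Q"
  shows "\<exists>Y f. Y \<noteq> {} \<and> envy_free_matching P A Y f"
  using assms
proof (induction "card P" arbitrary: P Q A rule: less_induct)
  case less
  show ?case
  proof (cases "hall_condition P A")
    case True
    then obtain f where "inj_on f P" "\<forall>p\<in>P. f p \<in> A p"
      using hall_marriage less.prems(1) by blast
    then have "envy_free_matching P A P f"
      unfolding envy_free_matching_def by blast
    then show ?thesis
      using less.prems(3) by blast
  next
    case False
    then obtain J where J: "J \<subseteq> P" "card (\<Union>(A ` J)) < card J"
      unfolding hall_condition_def by (meson not_le)
    define U where "U = \<Union>(A ` J)"
    have size: "card (P - J) \<le> card (Q - U)" and "\<not> Q \<subseteq> U"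
      using deficient_set_Diff[OF less.prems(1,2,4,6) J] unfolding U_def by auto
    then have "a \<notin> J"
      using less.prems(5) by (auto simp: U_def)
    have "J \<noteq> {}"
      using J(2) by auto
    then have "card (P - J) < card P"
      using J(1) less.prems(1) by (intro psubset_card_mono) auto
    moreover have "a \<in> P - J" "A a - U = Q - U" "\<forall>p\<in>P - J. A p - U \<subseteq> Q - U"
      using less.prems(3,5,6) \<open>a \<notin> J\<close> by auto
    ultimately obtain Y f where Y: "Y \<noteq> {}" "envy_free_matching (P - J) (\<lambda>p. A p - U) Y f"
      using less.hyps[of "P - J" "Q - U" "\<lambda>p. A p - U"] less.prems(1,2) size by blast
    have "envy_free_matching P A Y f"
      using Y(2) unfolding U_def by (rule envy_free_matching_Diff_neighbourhood)
    then show ?thesis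
      using Y(1) by blast
  qed
qed

definition is_allocation :: "'i set \<Rightarrow> 'a set \<Rightarrow> ('i \<Rightarrow> 'a set) \<Rightarrow> bool" where
  "is_allocation N R A \<longleftrightarrow> \<Union>(A ` N) = R \<and> disjoint_family_on A N"

lemma is_partition_iff_allocation: "is_partition S m C \<longleftrightarrow> is_allocation {..<m} S C"
  unfolding is_partition_def is_allocation_def disjoint_family_on_def by auto

lemma is_allocation_Un:
  assumes "is_allocation Y S A" "is_allocation Z T B" "Y \<inter> Z = {}" "S \<inter> T = {}"
  shows "is_allocation (Y \<union> Z) (S \<union> T) (\<lambda>j. if j \<in> Y then A j else B j)"
  using assms unfolding is_allocation_def disjoint_family_on_def by (auto; blast)

lemma is_allocation_reindex:
  assumes "is_allocation Q R C" "inj_on f Y" "f ` Y \<subseteq> Q"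
  shows "is_allocation Y (\<Union>(C ` f ` Y)) (C \<circ> f)"
  unfolding is_allocation_def
proof
  show "\<Union>((C \<circ> f) ` Y) = \<Union>(C ` f ` Y)"
    by (simp add: image_comp)
  show "disjoint_family_on (C \<circ> f) Y"
    unfolding disjoint_family_on_def
  proof (intro ballI impI)
    fix y z assume "y \<in> Y" "z \<in> Y" "y \<noteq> z"
    then have "f y \<in> Q" "f z \<in> Q" "f y \<noteq> f z"
      using assms(2,3) by (auto dest: inj_onD)
    then show "(C \<circ> f) y \<inter> (C \<circ> f) z = {}"
      using assms(1) unfolding is_allocation_def by (auto dest: disjoint_family_onD)
  qed
qed

lemma rmms_prop_partition:
  assumes "rmms_prop R v k t" "0 < k"
  shows "\<exists>C. is_partition R k C \<and> (\<forall>i<k. t \<le> v (C i))"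
  using assms(1)[unfolded rmms_prop_def, rule_format, of 0 "\<lambda>_. {}"] assms(2) by simp

lemma rmms_prop_Diff_bundles:
  assumes rmms: "rmms_prop R v k t" and "d \<le> k"
    and D: "\<forall>i<d. D i \<subseteq> R \<and> v (D i) < t" "disjoint_family_on D {..<d}"
  shows "rmms_prop (R - (\<Union>i<d. D i)) v (k - d) t"
  unfolding rmms_prop_def
proof (intro allI impI)
  fix m B assume m: "m < k - d"
    and B: "(\<forall>j<m. B j \<subseteq> R - (\<Union>i<d. D i) \<and> v (B j) < t) \<and> (\<forall>i<m. \<forall>j<m. i \<noteq> j \<longrightarrow> B i \<inter> B j = {})"
  define B' where "B' j = (if j < m then B j else D (j - m))" for j
  have "j \<in> (\<lambda>i. i + m) ` {..<d}" if "j < m + d" "\<not> j < m" for j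
    using that by (intro image_eqI[of j _ "j - m"]) auto
  then have indices: "{..<m + d} = {..<m} \<union> (\<lambda>i. i + m) ` {..<d}"
    by auto
  have "(\<Union>j<m + d. B' j) = (\<Union>j<m. B j) \<union> (\<Union>i<d. D i)"
    unfolding indices by (auto simp: B'_def)
  then have residual: "R - (\<Union>j<m + d. B' j) = R - (\<Union>i<d. D i) - (\<Union>j<m. B j)"
    by blast
  have "m + d < k"
    using m by linarith
  moreover have "\<forall>j<m + d. B' j \<subseteq> R \<and> v (B' j) < t"
    using B D(1) by (auto simp: B'_def)
  moreover have "\<forall>i<m + d. \<forall>j<m + d. i \<noteq> j \<longrightarrow> B' i \<inter> B' j = {}"
  proof (intro allI impI)
    fix i j assume ij: "i < m + d" "j < m + d" "i \<noteq> j"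
    have B_D: "B i' \<inter> D l = {}" if "i' < m" "l < d" for i' l
      using B that by blast
    show "B' i \<inter> B' j = {}"
    proof (cases "i < m"; cases "j < m")
      assume "\<not> i < m" "\<not> j < m"
      then show ?thesis
        using ij D(2) by (auto simp: B'_def disjoint_family_on_def)
    qed (use ij B B_D in \<open>auto simp: B'_def Int_commute\<close>)
  qed
  ultimately obtain C where "is_partition (R - (\<Union>j<m + d. B' j)) (k - (m + d)) C"
    "\<forall>i<k - (m + d). t \<le> v (C i)"
    using rmms unfolding rmms_prop_def by blast
  then show "\<exists>C. is_partition (R - (\<Union>i<d. D i) - (\<Union>j<m. B j)) (k - d - m) C \<and> (\<forall>i<k - d - m. t \<le> v (C i))"
    unfolding residual by (auto simp: add.commute diff_diff_left)
qed

lemma rmms_prop_Diff_family: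
  assumes rmms: "rmms_prop R v k t" and Y: "finite Y" "card Y \<le> k"
    and D: "\<forall>y\<in>Y. D y \<subseteq> R \<and> v (D y) < t" "disjoint_family_on D Y"
  shows "rmms_prop (R - \<Union>(D ` Y)) v (k - card Y) t"
proof -
  obtain h where h: "bij_betw h {..<card Y} Y"
    using ex_bij_betw_nat_finite[OF Y(1)] by (auto simp: atLeast0LessThan)
  then have "\<Union>(D ` Y) = (\<Union>i<card Y. D (h i))"
    by (metis bij_betw_imp_surj_on image_image)
  moreover have "disjoint_family_on (\<lambda>i. D (h i)) {..<card Y}"
    using D(2) h unfolding disjoint_family_on_def bij_betw_def inj_on_def by blast
  moreover have "\<forall>i<card Y. D (h i) \<subseteq> R \<and> v (D (h i)) < t"
    using D(1) h by (auto dest: bij_betwE)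
  ultimately show ?thesis
    using rmms_prop_Diff_bundles[OF rmms Y(2)] by simp
qed

lemma rmms_partial_allocation:
  assumes "finite N" "a \<in> N" "\<forall>j\<in>N. rmms_prop R (v j) (card N) (t j)"
  \<comment> \<open>If all of N is matched, the RMMS property for no remaining agents is vacuous,
    so that the matched bundles exhaust R has to be recorded separately.\<close>
  obtains Y S A where "Y \<noteq> {}" "Y \<subseteq> N" "S \<subseteq> R" "Y = N \<longrightarrow> S = R"
    "is_allocation Y S A" "\<forall>y\<in>Y. t y \<le> v y (A y)"
    "\<forall>p\<in>N - Y. rmms_prop (R - S) (v p) (card (N - Y)) (t p)"
proof -
  define k where "k = card N"
  have "0 < k"
    using assms(1,2) by (auto simp: k_def card_gt_0_iff)
  then obtain C where C: "is_allocation {..<k} R C" "\<forall>q<k. t a \<le> v a (C q)"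
    using rmms_prop_partition assms(2,3) unfolding k_def is_partition_iff_allocation by blast
  define likes where "likes j = {q\<in>{..<k}. t j \<le> v j (C q)}" for j
  obtain Y f where "Y \<noteq> {}" and EF: "envy_free_matching N likes Y f"
    using envy_free_matching_exists[of N "{..<k}" a likes] assms(1,2) C(2)
    by (auto simp: k_def likes_def)
  then have Y: "Y \<noteq> {}" "Y \<subseteq> N" "inj_on f Y" "\<forall>y\<in>Y. f y < k \<and> t y \<le> v y (C (f y))"
    unfolding envy_free_matching_def likes_def by auto
  have unmatched: "v p (C (f y)) < t p" if "p \<in> N - Y" "y \<in> Y" for p y
  proof -
    have "f y \<notin> likes p"
      using EF that unfolding envy_free_matching_def by blast
    then show ?thesis
      using Y(4) that(2) by (auto simp: likes_def)
  qed
  define S where "S = \<Union>(C ` f ` Y)"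
  have "f ` Y \<subseteq> {..<k}"
    using Y(4) by auto
  then have alloc: "is_allocation Y S (C \<circ> f)"
    using is_allocation_reindex[OF C(1) Y(3)] by (simp add: S_def)
  have "S \<subseteq> R"
    using C(1) \<open>f ` Y \<subseteq> {..<k}\<close> unfolding S_def is_allocation_def by auto
  moreover have "S = R" if "Y = N"
  proof -
    have "f ` N = {..<k}"
      using Y(3) \<open>f ` Y \<subseteq> {..<k}\<close> that by (simp add: k_def card_subset_eq card_image)
    then show ?thesis
      using C(1) that unfolding S_def is_allocation_def by simp
  qed
  moreover note alloc
  moreover have "rmms_prop (R - S) (v p) (card (N - Y)) (t p)" if "p \<in> N - Y" for p
  proof -
    have "card (N - Y) = card N - card Y" "card Y \<le> card N" "finite Y"
      using Y(2) assms(1) by (auto simp: card_Diff_subset card_mono finite_subset)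
    then show ?thesis
      using rmms_prop_Diff_family[of R "v p" "card N" "t p" Y "C \<circ> f"] assms(3) that
        alloc \<open>S \<subseteq> R\<close> unmatched
      by (auto simp: S_def is_allocation_def)
  qed
  ultimately show ?thesis
    using that Y by auto
qed

lemma rmms_allocation_exists:
  assumes "finite N" "N \<noteq> {}" "\<forall>j\<in>N. rmms_prop R (v j) (card N) (t j)"
  shows "\<exists>A. is_allocation N R A \<and> (\<forall>j\<in>N. t j \<le> v j (A j))"
  using assms
proof (induction "card N" arbitrary: N R rule: less_induct)
  case less
  then obtain a where "a \<in> N"
    by blast
  obtain Y S A where Y: "Y \<noteq> {}" "Y \<subseteq> N" "S \<subseteq> R" "Y = N \<longrightarrow> S = R"
    "is_allocation Y S A" "\<forall>y\<in>Y. t y \<le> v y (A y)"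
    "\<forall>p\<in>N - Y. rmms_prop (R - S) (v p) (card (N - Y)) (t p)"
    by (rule rmms_partial_allocation[OF less.prems(1) \<open>a \<in> N\<close> less.prems(3)])
  show ?case
  proof (cases "Y = N")
    case True
    then show ?thesis
      using Y by auto
  next
    case False
    have "card (N - Y) < card N" "finite (N - Y)" "N - Y \<noteq> {}"
      using Y(1,2) False less.prems(1) by (auto intro: psubset_card_mono)
    then obtain A' where A': "is_allocation (N - Y) (R - S) A'" "\<forall>j\<in>N - Y. t j \<le> v j (A' j)"
      using less.hyps Y(7) by blast
    have "is_allocation (Y \<union> (N - Y)) (S \<union> (R - S)) (\<lambda>j. if j \<in> Y then A j else A' j)"
      using Y(5) A'(1) by (intro is_allocation_Un) auto
    moreover have "Y \<union> (N - Y) = N" "S \<union> (R - S) = R"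
      using Y(2,3) by auto
    ultimately show ?thesis
      using Y(6) A'(2) by (intro exI[of _ "\<lambda>j. if j \<in> Y then A j else A' j"]) auto
  qed
qed

lemma valuation_nonneg: "valuation M v \<Longrightarrow> S \<subseteq> M \<Longrightarrow> 0 \<le> v S"
  unfolding valuation_def by (metis empty_subsetI)

lemma rmms_prop_zero:
  assumes "valuation M v" "0 < n"
  shows "rmms_prop M v n 0"
  unfolding rmms_prop_def
proof (intro allI impI)
  fix k B assume "k < n" and "(\<forall>j<k. B j \<subseteq> M \<and> v (B j) < 0) \<and> (\<forall>i<k. \<forall>j<k. i \<noteq> j \<longrightarrow> B i \<inter> B j = {})"
  then have "k = 0"
    using valuation_nonneg[OF assms(1)] by (metis gr0I not_le)
  define C where "C i = (if i = 0 then M else {})" for i :: nat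
  have "is_partition M n C" "\<forall>i<n. 0 \<le> v (C i)"
    using assms valuation_nonneg[OF assms(1)] unfolding is_partition_def C_def by (auto intro!: UN_I[of 0])
  then show "\<exists>C. is_partition (M - (\<Union>j<k. B j)) (n - k) C \<and> (\<forall>i<n - k. 0 \<le> v (C i))"
    using \<open>k = 0\<close> by auto
qed

lemma rmms_prop_raise_threshold:
  assumes rmms: "rmms_prop M v n t" and gap: "\<forall>S\<subseteq>M. t \<le> v S \<longrightarrow> s \<le> v S"
  shows "rmms_prop M v n s"
  unfolding rmms_prop_def
proof (intro allI impI)
  fix k B assume "k < n"
    and B: "(\<forall>j<k. B j \<subseteq> M \<and> v (B j) < s) \<and> (\<forall>i<k. \<forall>j<k. i \<noteq> j \<longrightarrow> B i \<inter> B j = {})"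
  have "(\<forall>j<k. B j \<subseteq> M \<and> v (B j) < t) \<and> (\<forall>i<k. \<forall>j<k. i \<noteq> j \<longrightarrow> B i \<inter> B j = {})"
    using B gap by (meson not_le)
  from rmms[unfolded rmms_prop_def, rule_format, OF \<open>k < n\<close> this]
  obtain C where C: "is_partition (M - (\<Union>j<k. B j)) (n - k) C" "\<forall>i<n - k. t \<le> v (C i)"
    by blast
  have "s \<le> v (C i)" if "i < n - k" for i
  proof -
    have "C i \<subseteq> M"
      using C(1) that unfolding is_partition_def by blast
    then show ?thesis
      using gap C(2) that by blast
  qed
  then show "\<exists>C. is_partition (M - (\<Union>j<k. B j)) (n - k) C \<and> (\<forall>i<n - k. s \<le> v (C i))"
    using C(1) by blast
qed

lemma rmms_prop_RMMS:
  assumes "finite M" "0 < n" "valuation M v"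
  shows "rmms_prop M v n (RMMS M v n)"
proof -
  define T where "T = {x \<in> v ` Pow M. rmms_prop M v n x}"
  have "finite T"
    using assms(1) by (simp add: T_def)
  moreover have "v {} = 0"
    using assms(3) by (simp add: valuation_def)
  then have "0 \<in> T"
    using rmms_prop_zero[OF assms(3,2)] unfolding T_def by (metis Pow_bottom image_eqI mem_Collect_eq)
  ultimately have Max_T: "Max T \<in> T"
    by (intro Max_in) auto
  have "t \<le> Max T" if rmms_t: "rmms_prop M v n t" for t
  proof -
    define W where "W = {x \<in> v ` Pow M. t \<le> x}"
    obtain C where "is_partition M n C" "\<forall>i<n. t \<le> v (C i)"
      using rmms_prop_partition[OF rmms_t assms(2)] by blast
    then have "v (C 0) \<in> W"
      using assms(2) unfolding W_def is_partition_def by blast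
    moreover have fin_W: "finite W"
      using assms(1) by (simp add: W_def)
    ultimately have Min_W: "Min W \<in> W"
      by (intro Min_in) auto
    have "Min W \<le> v S" if "S \<subseteq> M" "t \<le> v S" for S
      using fin_W that by (intro Min_le) (auto simp: W_def)
    then have "rmms_prop M v n (Min W)"
      using rmms_t rmms_prop_raise_threshold by blast
    then have "Min W \<le> Max T"
      using Min_W \<open>finite T\<close> by (auto simp: T_def W_def)
    then show ?thesis
      using Min_W by (simp add: W_def)
  qed
  then have "RMMS M v n = Max T"
    unfolding RMMS_def using Max_T by (intro Greatest_equality) (auto simp: T_def)
  then show ?thesis
    using Max_T by (simp add: T_def)
qed

theorem mainTheorem2:
  fixes M :: "'a set" and n :: nat and v :: "nat \<Rightarrow> 'a set \<Rightarrow> real"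
  assumes "finite M" and "n \<ge> 1"
    and "\<forall>i<n. valuation M (v i)"
  shows "\<exists>A :: nat \<Rightarrow> 'a set. is_partition M n A \<and> (\<forall>i<n. RMMS M (v i) n \<le> v i (A i))"
proof -
  have "0 < n"
    using assms(2) by simp
  then have "\<forall>i\<in>{..<n}. rmms_prop M (v i) (card {..<n}) (RMMS M (v i) n)"
    using assms(1,3) by (auto intro: rmms_prop_RMMS)
  then obtain A where "is_allocation {..<n} M A" "\<forall>i\<in>{..<n}. RMMS M (v i) n \<le> v i (A i)"
    using rmms_allocation_exists[of "{..<n}" M v "\<lambda>i. RMMS M (v i) n"] \<open>0 < n\<close> by auto
  then show ?thesis
    unfolding is_partition_iff_allocation by auto
qed

end
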